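(* For every positive integer $k$, the windmill of $k$ wheels $W_4^{(k)}$ is difference distance magic orientable.
   Context: For $k\in\mathbb{Z}^+$, $W_4^{(k)}$ is the simple undirected graph on $1+4k$ vertices with vertex set $\{v\}\cup\{v_{ij}:1\le i\le k,\ 1\le j\le 4\}$ and edge set $\bigcup_{i=1}^k\big(\{v_{i1}v_{i2},v_{i1}v_{i3},v_{i3}v_{i4},v_{i2}v_{i4}\}\cup\{vv_{i1},vv_{i2},vv_{i3},vv_{i4}\}\big)$. An orientation of a graph assigns a direction to each edge, giving an oriented graph. In an oriented graph, $N^+(x)=\{y:(y,x)\text{ is an arc}\}$, $N^-(x)=\{y:(x,y)\text{ is an arc}\}$, and for a labeling $f$, $wt_f(x)=\sum_{y\in N^+(x)}f(y)-\sum_{y\in N^-(x)}f(y)$. A DDM labeling of an oriented graph on $n$ vertices is a bijection $f:V\to\{1,\dots,n\}$ with $wt_f(x)=0$ for all $x$. A graph is difference distance magic orientable (DDMO) if it has an orientation admitting a DDM labeling. *)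

theory Defs
  imports Main
begin

text \<open>A simple undirected graph is given by a vertex set V and a set E of
  2-element subsets of V.\<close>

definition is_orientation :: "'a set \<Rightarrow> 'a set set \<Rightarrow> ('a \<times> 'a) set \<Rightarrow> bool" where
  "is_orientation V E D \<longleftrightarrow>
     (\<forall>(x,y)\<in>D. {x,y} \<in> E) \<and>
     (\<forall>e\<in>E. \<exists>x y. e = {x,y} \<and> x \<noteq> y \<and> (((x,y) \<in> D) \<noteq> ((y,x) \<in> D)))"

text \<open>In-neighbours N^+(x) = {y. (y,x) arc}, out-neighbours N^-(x) = {y. (x,y) arc}.\<close>

definition in_nbrs :: "('a \<times> 'a) set \<Rightarrow> 'a \<Rightarrow> 'a set" where
  "in_nbrs D x = {y. (y, x) \<in> D}"

definition out_nbrs :: "('a \<times> 'a) set \<Rightarrow> 'a \<Rightarrow> 'a set" where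
  "out_nbrs D x = {y. (x, y) \<in> D}"

definition wt :: "('a \<times> 'a) set \<Rightarrow> ('a \<Rightarrow> nat) \<Rightarrow> 'a \<Rightarrow> int" where
  "wt D f x = (\<Sum>y\<in>in_nbrs D x. int (f y)) - (\<Sum>y\<in>out_nbrs D x. int (f y))"

definition is_DDM_labeling :: "'a set \<Rightarrow> ('a \<times> 'a) set \<Rightarrow> ('a \<Rightarrow> nat) \<Rightarrow> bool" where
  "is_DDM_labeling V D f \<longleftrightarrow>
     bij_betw f V {1..card V} \<and> (\<forall>x\<in>V. wt D f x = 0)"

definition DDMO :: "'a set \<Rightarrow> 'a set set \<Rightarrow> bool" where
  "DDMO V E \<longleftrightarrow> (\<exists>D f. is_orientation V E D \<and> is_DDM_labeling V D f)"

text \<open>Windmill W_4^(k): centre v = None, v_{ij} = Some (i,j), 1 \<le> i \<le> k, 1 \<le> j \<le> 4.\<close>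

definition windmill_V :: "nat \<Rightarrow> (nat \<times> nat) option set" where
  "windmill_V k = {None} \<union> {Some (i,j) | i j. 1 \<le> i \<and> i \<le> k \<and> 1 \<le> j \<and> j \<le> 4}"

definition windmill_E :: "nat \<Rightarrow> (nat \<times> nat) option set set" where
  "windmill_E k = (\<Union>i\<in>{1..k}.
     {{Some (i,1), Some (i,2)}, {Some (i,1), Some (i,3)},
      {Some (i,3), Some (i,4)}, {Some (i,2), Some (i,4)},
      {None, Some (i,1)}, {None, Some (i,2)}, {None, Some (i,3)}, {None, Some (i,4)}})"

end

theory Submission
  imports Defs
begin

text \<open>Colouring the hub 0, the vertices \<open>v\<^sub>i\<^sub>2, v\<^sub>i\<^sub>3\<close> with 1 and \<open>v\<^sub>i\<^sub>1, v\<^sub>i\<^sub>4\<close>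
  with 2 is a proper 3-colouring, so orienting every edge from colour \<open>c\<close> to colour
  \<open>c + 1 mod 3\<close> orients the windmill.  With the labels \<open>v = 4k + 1\<close>, \<open>v\<^sub>i\<^sub>1 = i\<close>,
  \<open>v\<^sub>i\<^sub>2 = k + i\<close>, \<open>v\<^sub>i\<^sub>3 = 3k + 1 - i\<close>, \<open>v\<^sub>i\<^sub>4 = 4k + 1 - i\<close>, both pairs
  \<open>{v\<^sub>i\<^sub>1, v\<^sub>i\<^sub>4}\<close> and \<open>{v\<^sub>i\<^sub>2, v\<^sub>i\<^sub>3}\<close> have label sum \<open>4k + 1\<close>, the label of the hub.
  Every rim vertex has the hub on one side and one of these pairs on the other,
  and the hub receives from \<open>k\<close> pairs and sends to \<open>k\<close> pairs, so all weights vanish.\<close>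

definition cyclic_orientation :: "'a set set \<Rightarrow> ('a \<Rightarrow> nat) \<Rightarrow> ('a \<times> 'a) set" where
  "cyclic_orientation E c = {(x,y). {x,y} \<in> E \<and> c y = (c x + 1) mod 3}"

lemma distinct_mod_3_successor:
  fixes a b :: nat
  assumes "a < 3" "b < 3" "a \<noteq> b"
  shows "(b = (a + 1) mod 3) \<noteq> (a = (b + 1) mod 3)"
  using assms by (auto simp: mod_Suc)

lemma is_orientation_cyclic_orientation:
  assumes proper: "\<And>e. e \<in> E \<Longrightarrow> \<exists>x y. e = {x,y} \<and> c x \<noteq> c y"
    and colours: "\<And>x. c x < 3"
  shows "is_orientation V E (cyclic_orientation E c)"
  unfolding is_orientation_def
proof (intro conjI ballI)
  fix a assume "a \<in> cyclic_orientation E c"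
  then show "case a of (x,y) \<Rightarrow> {x,y} \<in> E"
    unfolding cyclic_orientation_def by auto
next
  fix e assume "e \<in> E"
  with proper obtain x y where e: "e = {x,y}" and "c x \<noteq> c y"
    by blast
  then have "{x,y} \<in> E" and "{y,x} \<in> E"
    using \<open>e \<in> E\<close> insert_commute[of x y] by auto
  then have "((x,y) \<in> cyclic_orientation E c) = (c y = (c x + 1) mod 3)"
    and "((y,x) \<in> cyclic_orientation E c) = (c x = (c y + 1) mod 3)"
    by (simp_all add: cyclic_orientation_def)
  moreover have "(c y = (c x + 1) mod 3) \<noteq> (c x = (c y + 1) mod 3)"
    using \<open>c x \<noteq> c y\<close> colours by (intro distinct_mod_3_successor)
  moreover have "x \<noteq> y"
    using \<open>c x \<noteq> c y\<close> by blast
  ultimately show "\<exists>x y. e = {x,y} \<and> x \<noteq> y \<and>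
      ((x,y) \<in> cyclic_orientation E c) \<noteq> ((y,x) \<in> cyclic_orientation E c)"
    using e by blast
qed

lemma in_nbrs_cyclic_orientation:
  assumes "{y. {y,x} \<in> E} = N"
  shows "in_nbrs (cyclic_orientation E c) x = {y \<in> N. c x = (c y + 1) mod 3}"
  using assms unfolding in_nbrs_def cyclic_orientation_def by auto

lemma out_nbrs_cyclic_orientation:
  assumes "{y. {y,x} \<in> E} = N"
  shows "out_nbrs (cyclic_orientation E c) x = {y \<in> N. c y = (c x + 1) mod 3}"
  using assms unfolding out_nbrs_def cyclic_orientation_def by (auto simp: insert_commute[of x])

definition windmill_colour :: "(nat \<times> nat) option \<Rightarrow> nat" where
  "windmill_colour x = (case x of None \<Rightarrow> 0 | Some (i,j) \<Rightarrow> if j = 2 \<or> j = 3 then 1 else 2)"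

lemma windmill_colour_less_3: "windmill_colour x < 3"
  unfolding windmill_colour_def by (auto split: option.split)

lemma windmill_colour_proper:
  assumes "e \<in> windmill_E k"
  shows "\<exists>x y. e = {x,y} \<and> windmill_colour x \<noteq> windmill_colour y"
proof -
  from assms obtain i where
    "e \<in> {{Some (i,1), Some (i,2)}, {Some (i,1), Some (i,3)},
          {Some (i,3), Some (i,4)}, {Some (i,2), Some (i,4)},
          {None, Some (i,1)}, {None, Some (i,2)}, {None, Some (i,3)}, {None, Some (i,4)}}"
    unfolding windmill_E_def by (rule UN_E)
  then show ?thesis
    unfolding insert_iff empty_iff
    by (elim disjE FalseE) (intro exI conjI, assumption, simp add: windmill_colour_def)+
qed

lemma windmill_adjacent_hub: "{y. {y, None} \<in> windmill_E k} = Some ` ({1..k} \<times> {1,2,3,4})"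
  unfolding windmill_E_def by (auto simp: doubleton_eq_iff)

lemma windmill_adjacent_outer:
  assumes "i \<in> {1..k}" "j \<in> {1,4}"
  shows "{y. {y, Some (i,j)} \<in> windmill_E k} = {None, Some (i,2), Some (i,3)}"
  using assms unfolding windmill_E_def by (elim insertE emptyE; auto simp: doubleton_eq_iff)

lemma windmill_adjacent_inner:
  assumes "i \<in> {1..k}" "j \<in> {2,3}"
  shows "{y. {y, Some (i,j)} \<in> windmill_E k} = {None, Some (i,1), Some (i,4)}"
  using assms unfolding windmill_E_def by (elim insertE emptyE; auto simp: doubleton_eq_iff)

definition windmill_orientation :: "nat \<Rightarrow> ((nat \<times> nat) option \<times> (nat \<times> nat) option) set" where
  "windmill_orientation k = cyclic_orientation (windmill_E k) windmill_colour"

lemma is_orientation_windmill_orientation: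
  "is_orientation (windmill_V k) (windmill_E k) (windmill_orientation k)"
  unfolding windmill_orientation_def
  using windmill_colour_proper windmill_colour_less_3 by (rule is_orientation_cyclic_orientation)

lemma nbrs_windmill_hub:
  shows "in_nbrs (windmill_orientation k) None = Some ` ({1..k} \<times> {1,4})"
    and "out_nbrs (windmill_orientation k) None = Some ` ({1..k} \<times> {2,3})"
  unfolding windmill_orientation_def
    in_nbrs_cyclic_orientation[OF windmill_adjacent_hub]
    out_nbrs_cyclic_orientation[OF windmill_adjacent_hub]
  by (auto simp: windmill_colour_def numeral_2_eq_2[symmetric])

lemma nbrs_windmill_outer:
  assumes "i \<in> {1..k}" "j \<in> {1,4}"
  shows "in_nbrs (windmill_orientation k) (Some (i,j)) = {Some (i,2), Some (i,3)}"
    and "out_nbrs (windmill_orientation k) (Some (i,j)) = {None}"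
proof -
  have "windmill_colour (Some (i,j)) = 2"
    using assms(2) by (auto simp: windmill_colour_def)
  then show "in_nbrs (windmill_orientation k) (Some (i,j)) = {Some (i,2), Some (i,3)}"
    and "out_nbrs (windmill_orientation k) (Some (i,j)) = {None}"
    unfolding windmill_orientation_def
      in_nbrs_cyclic_orientation[OF windmill_adjacent_outer[OF assms]]
      out_nbrs_cyclic_orientation[OF windmill_adjacent_outer[OF assms]]
    by (auto simp: windmill_colour_def)
qed

lemma nbrs_windmill_inner:
  assumes "i \<in> {1..k}" "j \<in> {2,3}"
  shows "in_nbrs (windmill_orientation k) (Some (i,j)) = {None}"
    and "out_nbrs (windmill_orientation k) (Some (i,j)) = {Some (i,1), Some (i,4)}"
proof -
  have "windmill_colour (Some (i,j)) = 1"
    using assms(2) by (auto simp: windmill_colour_def)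
  then show "in_nbrs (windmill_orientation k) (Some (i,j)) = {None}"
    and "out_nbrs (windmill_orientation k) (Some (i,j)) = {Some (i,1), Some (i,4)}"
    unfolding windmill_orientation_def
      in_nbrs_cyclic_orientation[OF windmill_adjacent_inner[OF assms]]
      out_nbrs_cyclic_orientation[OF windmill_adjacent_inner[OF assms]]
    by (auto simp: windmill_colour_def)
qed

definition windmill_label :: "nat \<Rightarrow> (nat \<times> nat) option \<Rightarrow> nat" where
  "windmill_label k x = (case x of None \<Rightarrow> 4*k+1
     | Some (i,j) \<Rightarrow> if j = 1 then i else if j = 2 then k+i
                     else if j = 3 then 3*k+1-i else 4*k+1-i)"

lemma windmill_V_eq: "windmill_V k = insert None (Some ` ({1..k} \<times> {1,2,3,4}))"
  unfolding windmill_V_def by auto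

lemma card_windmill_V: "card (windmill_V k) = 4*k+1"
  unfolding windmill_V_eq by (simp add: card_image card_cartesian_product)

lemma bij_betw_windmill_label: "bij_betw (windmill_label k) (windmill_V k) {1..4*k+1}"
proof (rule bij_betw_byWitness)
  define g :: "nat \<Rightarrow> (nat \<times> nat) option" where
    "g n = (if n \<le> k then Some (n,1) else if n \<le> 2*k then Some (n-k,2)
      else if n \<le> 3*k then Some (3*k+1-n,3) else if n \<le> 4*k then Some (4*k+1-n,4) else None)"
    for n
  show "\<forall>x\<in>windmill_V k. g (windmill_label k x) = x"
    unfolding windmill_V_eq by (auto simp: g_def windmill_label_def)
  show "\<forall>n\<in>{1..4*k+1}. windmill_label k (g n) = n"
    by (auto simp: g_def windmill_label_def)
  show "windmill_label k ` windmill_V k \<subseteq> {1..4*k+1}"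
    unfolding windmill_V_eq by (auto simp: windmill_label_def)
  show "g ` {1..4*k+1} \<subseteq> windmill_V k"
    by (auto simp: g_def windmill_V_def; arith)
qed

lemma windmill_label_pair_sums:
  assumes "i \<in> {1..k}"
  shows "windmill_label k (Some (i,1)) + windmill_label k (Some (i,4)) = 4*k+1"
    and "windmill_label k (Some (i,2)) + windmill_label k (Some (i,3)) = 4*k+1"
  using assms by (auto simp: windmill_label_def)

lemma sum_Some_times_doubleton:
  assumes "a \<noteq> b"
  shows "(\<Sum>y\<in>Some ` (I \<times> {a,b}). g y) = (\<Sum>i\<in>I. g (Some (i,a)) + g (Some (i,b)))"
  using assms by (simp add: sum.reindex sum.cartesian_product')

lemma wt_windmill_hub: "wt (windmill_orientation k) (windmill_label k) None = 0"
proof -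
  have pair_sum: "(\<Sum>y\<in>Some ` ({1..k} \<times> {a,b}). int (windmill_label k y))
      = (\<Sum>i\<in>{1..k}. int (4*k+1))"
    if "a \<noteq> b"
      and "\<And>i. i \<in> {1..k} \<Longrightarrow>
        windmill_label k (Some (i,a)) + windmill_label k (Some (i,b)) = 4*k+1"
    for a b
    using that by (simp add: sum_Some_times_doubleton flip: of_nat_add)
  show ?thesis
    unfolding wt_def nbrs_windmill_hub
    using pair_sum[of 1 4] pair_sum[of 2 3] windmill_label_pair_sums by simp
qed

lemma wt_windmill_rim:
  assumes "i \<in> {1..k}" "j \<in> {1,2,3,4}"
  shows "wt (windmill_orientation k) (windmill_label k) (Some (i,j)) = 0"
proof -
  have hub: "windmill_label k None = 4*k+1"
    by (simp add: windmill_label_def)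
  from assms(2) consider "j \<in> {1,4}" | "j \<in> {2,3}"
    by blast
  then show ?thesis
  proof cases
    case 1
    then show ?thesis
      unfolding wt_def nbrs_windmill_outer[OF assms(1) 1]
      using windmill_label_pair_sums[OF assms(1)] hub by (simp flip: of_nat_add)
  next
    case 2
    then show ?thesis
      unfolding wt_def nbrs_windmill_inner[OF assms(1) 2]
      using windmill_label_pair_sums[OF assms(1)] hub by (simp flip: of_nat_add)
  qed
qed

theorem theorem4:
  fixes k :: nat
  assumes "k \<ge> 1"
  shows "DDMO (windmill_V k) (windmill_E k)"
proof -
  have "wt (windmill_orientation k) (windmill_label k) x = 0" if "x \<in> windmill_V k" for x
    using that wt_windmill_hub wt_windmill_rim unfolding windmill_V_eq by auto
  then have "is_DDM_labeling (windmill_V k) (windmill_orientation k) (windmill_label k)"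
    unfolding is_DDM_labeling_def card_windmill_V using bij_betw_windmill_label by blast
  then show ?thesis
    unfolding DDMO_def using is_orientation_windmill_orientation by blast
qed

end
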